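(* For every countably infinite algebraically closed group $K$, the isomorphism class $\{G\in\mathcal G:\ \overline G\cong K\}$ is dense in $\mathcal G$.
   Context: Let $\mathbb N=\{1,2,3,\dots\}$. Equip $\mathbb N^{\mathbb N\times\mathbb N}$ with the product topology of the discrete topology on $\mathbb N$. Let $\mathcal G$ be the subspace consisting of those $A\in\mathbb N^{\mathbb N\times\mathbb N}$ that are the multiplication table of a group on the underlying set $\mathbb N$ whose identity element is $1$. For $G\in\mathcal G$, $\overline G$ denotes the group on $\mathbb N$ with multiplication table $G$. A group $K$ is algebraically closed if every finite system of equations and inequations (words in variables $x_1,x_2,\dots$ with constants from $K$, i.e. elements of the free product of the free group on the variables with $K$) that has a solution in some group containing $K$ already has a solution in $K$. *)

theory Defs
  imports "HOL-Analysis.Analysis" "HOL-Algebra.Group"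
begin

definition Npos :: "nat set" where "Npos = {1..}"

definition tbl_group :: "(nat \<times> nat \<Rightarrow> nat) \<Rightarrow> nat monoid" where
  "tbl_group A = \<lparr>carrier = Npos, mult = (\<lambda>x y. A (x, y)), one = 1\<rparr>"

definition table_top :: "(nat \<times> nat \<Rightarrow> nat) topology" where
  "table_top = product_topology (\<lambda>_. discrete_topology Npos) (Npos \<times> Npos)"

definition Gspace :: "(nat \<times> nat \<Rightarrow> nat) set" where
  "Gspace = {A \<in> topspace table_top. group (tbl_group A)}"

text \<open>Words in variables x_i (Inl i) and constants (Inr k), each letter with an
  inversion flag (True = inverse). These represent elements of F(X) * K.\<close>
type_synonym 'a word = "((nat + 'a) \<times> bool) list"

definition gpow1 :: "('b, 'm) monoid_scheme \<Rightarrow> 'b \<Rightarrow> bool \<Rightarrow> 'b" where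
  "gpow1 H x e = (if e then inv\<^bsub>H\<^esub> x else x)"

fun eval_word :: "('b, 'm) monoid_scheme \<Rightarrow> ('a \<Rightarrow> 'b) \<Rightarrow> (nat \<Rightarrow> 'b) \<Rightarrow> 'a word \<Rightarrow> 'b" where
  "eval_word H h s [] = \<one>\<^bsub>H\<^esub>"
| "eval_word H h s ((l, e) # w) =
     gpow1 H (case l of Inl i \<Rightarrow> s i | Inr k \<Rightarrow> h k) e \<otimes>\<^bsub>H\<^esub> eval_word H h s w"

definition word_consts :: "'a word \<Rightarrow> 'a set" where
  "word_consts w = {k. \<exists>e. (Inr k, e) \<in> set w}"

definition solves :: "('b, 'm) monoid_scheme \<Rightarrow> ('a \<Rightarrow> 'b) \<Rightarrow> (nat \<Rightarrow> 'b)
    \<Rightarrow> 'a word list \<Rightarrow> 'a word list \<Rightarrow> bool" where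
  "solves H h s eqs neqs \<longleftrightarrow>
     (\<forall>i. s i \<in> carrier H) \<and>
     (\<forall>w\<in>set eqs. eval_word H h s w = \<one>\<^bsub>H\<^esub>) \<and>
     (\<forall>w\<in>set neqs. eval_word H h s w \<noteq> \<one>\<^bsub>H\<^esub>)"

text \<open>Overgroups (groups containing K, i.e. with an
  injective homomorphism from K) are taken with carrier in the type 'a + nat, which
  has room for every group generated by K and finitely many further elements.\<close>
definition alg_closed :: "'a monoid \<Rightarrow> bool" where
  "alg_closed K \<longleftrightarrow> group K \<and>
     (\<forall>(eqs :: 'a word list) neqs.
        (\<forall>w \<in> set eqs \<union> set neqs. word_consts w \<subseteq> carrier K) \<longrightarrow>
        (\<exists>(H :: ('a + nat) monoid) h s. group H \<and> h \<in> hom K H \<and>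
             inj_on h (carrier K) \<and> solves H h s eqs neqs) \<longrightarrow>
        (\<exists>s. solves K id s eqs neqs))"

end

theory Submission
  imports Defs
begin

text \<open>
  A basic open set around a group table \<open>G\<close> prescribes finitely many entries \<open>G(a,b)\<close>.
  Let \<open>S\<close> be the finite set of elements occurring in them, together with \<open>1\<close>. In the
  overgroup \<open>G \<times> K\<close> of \<open>K\<close> the elements \<open>(x, 1)\<close>, \<open>x \<in> S\<close>, satisfy the equations
  \<open>x y = G(x,y)\<close> and the inequations \<open>x \<noteq> y\<close>; since \<open>K\<close> is algebraically closed, this
  finite system has a solution \<open>s\<close> in \<open>K\<close>. As \<open>K\<close> is countably infinite, the injection
  \<open>s\<close> on \<open>S\<close> extends to a bijection \<open>\<beta>\<close> from \<open>\<nat>\<close> onto \<open>K\<close>, and pulling back the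
  multiplication of \<open>K\<close> along \<open>\<beta>\<close> gives a table isomorphic to \<open>K\<close> that agrees with \<open>G\<close>
  on the prescribed entries.
\<close>

lemma group_iso_of_bij_hom:
  assumes "group G" and "f \<in> hom G H" and "bij_betw f (carrier G) (carrier H)"
    and "\<one>\<^bsub>H\<^esub> = f \<one>\<^bsub>G\<^esub>"
  shows "group H" and "f \<in> iso G H"
proof -
  have "H = H\<lparr>carrier := f ` carrier G, one := f \<one>\<^bsub>G\<^esub>\<rparr>"
    using assms(3,4) by (simp add: bij_betw_def)
  then show "group H"
    using group.hom_imp_img_group[OF assms(1,2)] by metis
  show "f \<in> iso G H"
    using assms(2,3) by (simp add: iso_def)
qed

lemma eval_word_closed:
  assumes "group H" and "\<forall>i. s i \<in> carrier H" and "h ` word_consts w \<subseteq> carrier H"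
  shows "eval_word H h s w \<in> carrier H"
  using assms(3)
proof (induction w)
  case Nil
  then show ?case using assms(1) by (simp add: group.is_monoid)
next
  case (Cons a w)
  obtain l e where a: "a = (l, e)" by force
  have "(case l of Inl i \<Rightarrow> s i | Inr k \<Rightarrow> h k) \<in> carrier H"
    using Cons.prems assms(2) by (auto simp: a word_consts_def split: sum.split)
  moreover have "h ` word_consts w \<subseteq> carrier H"
    using Cons.prems by (auto simp: a word_consts_def)
  ultimately show ?case
    using Cons.IH assms(1) by (simp add: a gpow1_def group.inv_closed group.is_monoid monoid.m_closed)
qed

lemma eval_word_hom:
  assumes "group G" and "group H" and "f \<in> hom G H"
    and "\<forall>i. s i \<in> carrier G" and "h ` word_consts w \<subseteq> carrier G"
  shows "eval_word H (f \<circ> h) (f \<circ> s) w = f (eval_word G h s w)"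
proof -
  interpret group_hom G H f
    using assms(1-3) by (simp add: group_hom_def group_hom_axioms_def)
  show ?thesis
    using assms(5)
  proof (induction w)
    case Nil
    then show ?case by simp
  next
    case (Cons a w)
    obtain l e where a: "a = (l, e)" by force
    define x where "x = (case l of Inl i \<Rightarrow> s i | Inr k \<Rightarrow> h k)"
    have x: "x \<in> carrier G"
      using Cons.prems assms(4) by (auto simp: x_def a word_consts_def split: sum.split)
    have w: "h ` word_consts w \<subseteq> carrier G"
      using Cons.prems by (auto simp: a word_consts_def)
    have unfold_G: "eval_word G h s (a # w) = gpow1 G x e \<otimes>\<^bsub>G\<^esub> eval_word G h s w"
      by (simp add: a x_def)
    have unfold_H: "eval_word H (f \<circ> h) (f \<circ> s) (a # w)
        = gpow1 H (f x) e \<otimes>\<^bsub>H\<^esub> eval_word H (f \<circ> h) (f \<circ> s) w"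
      by (simp add: a x_def split: sum.split)
    have "gpow1 H (f x) e = f (gpow1 G x e)" and "gpow1 G x e \<in> carrier G"
      using x by (simp_all add: gpow1_def)
    then show ?case
      unfolding unfold_G unfold_H Cons.IH[OF w]
      using eval_word_closed[OF assms(1,4) w] by simp
  qed
qed

lemma solves_inj_hom:
  assumes "group G" and "group H" and "f \<in> hom G H" and "inj_on f (carrier G)"
    and "solves G h s eqs neqs"
    and "\<forall>w \<in> set eqs \<union> set neqs. h ` word_consts w \<subseteq> carrier G"
  shows "solves H (f \<circ> h) (f \<circ> s) eqs neqs"
proof -
  interpret group_hom G H f
    using assms(1-3) by (simp add: group_hom_def group_hom_axioms_def)
  have s: "\<forall>i. s i \<in> carrier G"
    using assms(5) by (simp add: solves_def)
  have eval: "eval_word H (f \<circ> h) (f \<circ> s) w = f (eval_word G h s w)"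
    and closed: "eval_word G h s w \<in> carrier G" if "w \<in> set eqs \<union> set neqs" for w
  proof -
    have "h ` word_consts w \<subseteq> carrier G"
      using assms(6) that by blast
    then show "eval_word H (f \<circ> h) (f \<circ> s) w = f (eval_word G h s w)"
      and "eval_word G h s w \<in> carrier G"
      using eval_word_hom[OF assms(1-3) s] eval_word_closed[OF assms(1) s] by auto
  qed
  have "f x \<noteq> \<one>\<^bsub>H\<^esub>" if "x \<in> carrier G" "x \<noteq> \<one>\<^bsub>G\<^esub>" for x
    using that inj_onD[OF assms(4), of x "\<one>\<^bsub>G\<^esub>"] by auto
  then show ?thesis
    using assms(5) s eval closed by (simp add: solves_def)
qed

lemma alg_closed_solvable_if_solvable_in_countable_overgroup:
  fixes K :: "'a monoid" and L :: "('b, 'c) monoid_scheme"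
  assumes "alg_closed K" and "group L" and "countable (carrier L)"
    and "h \<in> hom K L" and "inj_on h (carrier K)"
    and "solves L h s eqs neqs"
    and "\<forall>w \<in> set eqs \<union> set neqs. word_consts w \<subseteq> carrier K"
  shows "\<exists>s. solves K id s eqs neqs"
proof -
  \<comment> \<open>\<open>alg_closed\<close> only speaks about overgroups carried by \<open>'a + nat\<close>: move \<open>L\<close> there.\<close>
  define f :: "'b \<Rightarrow> 'a + nat" where "f = Inr \<circ> to_nat_on (carrier L)"
  let ?g = "inv_into (carrier L) f"
  define H :: "('a + nat) monoid" where
    "H = \<lparr>carrier = f ` carrier L, mult = (\<lambda>x y. f (?g x \<otimes>\<^bsub>L\<^esub> ?g y)), one = f \<one>\<^bsub>L\<^esub>\<rparr>"
  have inj: "inj_on f (carrier L)"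
    using inj_on_to_nat_on[OF assms(3)] by (simp add: f_def inj_on_def)
  have f: "f \<in> hom L H"
    using inj assms(2) by (auto simp: hom_def H_def group.is_monoid)
  have "bij_betw f (carrier L) (carrier H)"
    using inj by (simp add: H_def inj_on_imp_bij_betw)
  then have H: "group H"
    using group_iso_of_bij_hom(1)[OF assms(2) f] by (simp add: H_def)
  have "h ` carrier K \<subseteq> carrier L"
    using assms(4) by (auto simp: hom_def)
  then have "inj_on (f \<circ> h) (carrier K)"
    using comp_inj_on[OF assms(5)] inj_on_subset[OF inj] by blast
  moreover have "f \<circ> h \<in> hom K H"
    using hom_compose[OF assms(4) f] .
  moreover have "solves H (f \<circ> h) (f \<circ> s) eqs neqs"
    using solves_inj_hom[OF assms(2) H f inj assms(6)] assms(4,7) by (auto simp: hom_def)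
  ultimately show ?thesis
    using assms(1,7) H unfolding alg_closed_def by blast
qed

definition product_word :: "nat \<Rightarrow> nat \<Rightarrow> nat \<Rightarrow> 'a word" where
  "product_word a b c = [(Inl a, False), (Inl b, False), (Inl c, True)]"

definition quotient_word :: "nat \<Rightarrow> nat \<Rightarrow> 'a word" where
  "quotient_word a b = [(Inl a, False), (Inl b, True)]"

lemma word_consts_product_word [simp]: "word_consts (product_word a b c) = {}"
  by (simp add: product_word_def word_consts_def)

lemma word_consts_quotient_word [simp]: "word_consts (quotient_word a b) = {}"
  by (simp add: quotient_word_def word_consts_def)

lemma eval_product_word_eq_one_iff:
  assumes "group H" and "\<forall>i. s i \<in> carrier H"
  shows "eval_word H h s (product_word a b c) = \<one>\<^bsub>H\<^esub> \<longleftrightarrow> s a \<otimes>\<^bsub>H\<^esub> s b = s c"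
proof -
  interpret group H by fact
  show ?thesis
    using assms(2) by (simp add: product_word_def gpow1_def m_assoc[symmetric] inv_solve_right')
qed

lemma eval_quotient_word_eq_one_iff:
  assumes "group H" and "\<forall>i. s i \<in> carrier H"
  shows "eval_word H h s (quotient_word a b) = \<one>\<^bsub>H\<^esub> \<longleftrightarrow> s a = s b"
proof -
  interpret group H by fact
  show ?thesis
    using assms(2) by (simp add: quotient_word_def gpow1_def inv_solve_right')
qed

lemma alg_closed_finite_partial_embedding:
  fixes K :: "'a monoid" and L :: "nat monoid"
  assumes "alg_closed K" and "countable (carrier K)" and "group L"
    and "finite S" and "S \<subseteq> carrier L"
  shows "\<exists>s. (\<forall>n. s n \<in> carrier K) \<and> inj_on s S \<and>
           (\<forall>x\<in>S. \<forall>y\<in>S. x \<otimes>\<^bsub>L\<^esub> y \<in> S \<longrightarrow> s (x \<otimes>\<^bsub>L\<^esub> y) = s x \<otimes>\<^bsub>K\<^esub> s y)"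
proof -
  interpret L: group L by fact
  have K: "group K"
    using assms(1) by (simp add: alg_closed_def)
  interpret K: group K by fact
  have "finite {(x, y) \<in> S \<times> S. x \<otimes>\<^bsub>L\<^esub> y \<in> S}" and "finite {(x, y) \<in> S \<times> S. x \<noteq> y}"
    using assms(4) by (auto intro: finite_subset[of _ "S \<times> S"])
  then obtain products pairs
    where products: "set products = {(x, y) \<in> S \<times> S. x \<otimes>\<^bsub>L\<^esub> y \<in> S}"
      and pairs: "set pairs = {(x, y) \<in> S \<times> S. x \<noteq> y}"
    by (meson finite_list)
  define eqs :: "'a word list" where
    "eqs = map (\<lambda>(x, y). product_word x y (x \<otimes>\<^bsub>L\<^esub> y)) products"
  define neqs :: "'a word list" where
    "neqs = map (\<lambda>(x, y). quotient_word x y) pairs"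
  have constants: "\<forall>w \<in> set eqs \<union> set neqs. word_consts w \<subseteq> carrier K"
    by (auto simp: eqs_def neqs_def)
  define P where "P = L \<times>\<times> K"
  have P: "group P"
    unfolding P_def using assms(3) K by (rule DirProd_group)
  define \<sigma> where "\<sigma> n = (if n \<in> carrier L then n else \<one>\<^bsub>L\<^esub>, \<one>\<^bsub>K\<^esub>)" for n
  have \<sigma>: "\<forall>n. \<sigma> n \<in> carrier P"
    by (simp add: P_def \<sigma>_def)
  have "countable (carrier P)"
    using assms(2) by (simp add: P_def)
  moreover have "(\<lambda>k. (\<one>\<^bsub>L\<^esub>, k)) \<in> hom K P"
    by (auto simp: hom_def P_def)
  moreover have "inj_on (\<lambda>k. (\<one>\<^bsub>L\<^esub>, k)) (carrier K)"
    by (simp add: inj_on_def)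
  moreover have "solves P (\<lambda>k. (\<one>\<^bsub>L\<^esub>, k)) \<sigma> eqs neqs"
  proof -
    have "\<sigma> x \<otimes>\<^bsub>P\<^esub> \<sigma> y = \<sigma> (x \<otimes>\<^bsub>L\<^esub> y)" if "x \<in> S" "y \<in> S" for x y
      using that assms(5) by (auto simp: P_def \<sigma>_def)
    moreover have "\<sigma> x \<noteq> \<sigma> y" if "x \<in> S" "y \<in> S" "x \<noteq> y" for x y
      using that assms(5) by (auto simp: \<sigma>_def)
    ultimately show ?thesis
      using \<sigma> products pairs
      by (auto simp: solves_def eqs_def neqs_def eval_product_word_eq_one_iff[OF P \<sigma>]
          eval_quotient_word_eq_one_iff[OF P \<sigma>])
  qed
  ultimately obtain s where s: "solves K id s eqs neqs"
    using alg_closed_solvable_if_solvable_in_countable_overgroup[OF assms(1) P] constants by blast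
  then have sK: "\<forall>n. s n \<in> carrier K"
    by (simp add: solves_def)
  have "inj_on s S"
    using s pairs by (auto simp: inj_on_def solves_def neqs_def eval_quotient_word_eq_one_iff[OF K sK])
  moreover have "\<forall>x\<in>S. \<forall>y\<in>S. x \<otimes>\<^bsub>L\<^esub> y \<in> S \<longrightarrow> s (x \<otimes>\<^bsub>L\<^esub> y) = s x \<otimes>\<^bsub>K\<^esub> s y"
    using s products by (auto simp: solves_def eqs_def eval_product_word_eq_one_iff[OF K sK])
  ultimately show ?thesis
    using sK by blast
qed

lemma extend_inj_on_to_bij_betw:
  assumes "countable A" and "infinite A" and "countable B" and "infinite B"
    and "finite S" and "S \<subseteq> A" and "inj_on s S" and "s ` S \<subseteq> B"
  shows "\<exists>\<beta>. bij_betw \<beta> A B \<and> (\<forall>x\<in>S. \<beta> x = s x)"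
proof -
  have "infinite (A - S)" and "infinite (B - s ` S)"
    using assms(2,4,5) by (simp_all add: Diff_infinite_finite)
  then have "bij_betw (from_nat_into (B - s ` S) \<circ> to_nat_on (A - S)) (A - S) (B - s ` S)"
    using assms(1,3) by (intro bij_betw_trans[OF to_nat_on_infinite bij_betw_from_nat_into]) simp_all
  then obtain \<gamma> where \<gamma>: "bij_betw \<gamma> (A - S) (B - s ` S)"
    by blast
  define \<beta> where "\<beta> x = (if x \<in> S then s x else \<gamma> x)" for x
  have "bij_betw \<beta> S (s ` S)"
    using inj_on_imp_bij_betw[OF assms(7)] by (rule bij_betw_cong[THEN iffD1, rotated]) (simp add: \<beta>_def)
  moreover have "bij_betw \<beta> (A - S) (B - s ` S)"
    using \<gamma> by (rule bij_betw_cong[THEN iffD1, rotated]) (simp add: \<beta>_def)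
  ultimately have "bij_betw \<beta> (S \<union> (A - S)) (s ` S \<union> (B - s ` S))"
    by (rule bij_betw_combine) blast
  moreover have "S \<union> (A - S) = A" and "s ` S \<union> (B - s ` S) = B"
    using assms(6,8) by auto
  ultimately show ?thesis
    by (auto simp: \<beta>_def)
qed

\<comment> \<open>\<open>undefined\<close> off \<open>Npos \<times> Npos\<close> makes the table extensional, as \<open>table_top\<close> requires.\<close>
definition pullback_table :: "'a monoid \<Rightarrow> (nat \<Rightarrow> 'a) \<Rightarrow> nat \<times> nat \<Rightarrow> nat" where
  "pullback_table K \<beta> =
     (\<lambda>(a, b). if a \<in> Npos \<and> b \<in> Npos then inv_into Npos \<beta> (\<beta> a \<otimes>\<^bsub>K\<^esub> \<beta> b) else undefined)"

lemma pullback_table_eq: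
  assumes "bij_betw \<beta> Npos (carrier K)" and "a \<in> Npos" and "b \<in> Npos" and "c \<in> Npos"
    and "\<beta> a \<otimes>\<^bsub>K\<^esub> \<beta> b = \<beta> c"
  shows "pullback_table K \<beta> (a, b) = c"
  using assms bij_betw_inv_into_left by (fastforce simp: pullback_table_def)

lemma pullback_table_in_Gspace:
  assumes "group K" and "bij_betw \<beta> Npos (carrier K)" and "\<beta> 1 = \<one>\<^bsub>K\<^esub>"
  shows "pullback_table K \<beta> \<in> Gspace" and "tbl_group (pullback_table K \<beta>) \<cong> K"
proof -
  interpret K: group K by fact
  let ?A = "pullback_table K \<beta>" and ?g = "inv_into Npos \<beta>"
  have g: "bij_betw ?g (carrier K) Npos"
    using assms(2) by (rule bij_betw_inv_into)
  have \<beta>g: "\<beta> (?g x) = x" if "x \<in> carrier K" for x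
    using assms(2) that by (simp add: bij_betw_inv_into_right)
  have \<beta>: "\<beta> a \<in> carrier K" if "a \<in> Npos" for a
    using assms(2) that by (auto dest: bij_betwE)
  have "?g \<in> hom K (tbl_group ?A)"
    using g \<beta>g by (auto simp: hom_def tbl_group_def pullback_table_def bij_betwE)
  moreover have "\<one>\<^bsub>tbl_group ?A\<^esub> = ?g \<one>\<^bsub>K\<^esub>"
    using assms(2,3) bij_betw_inv_into_left by (fastforce simp: tbl_group_def Npos_def)
  moreover have "bij_betw ?g (carrier K) (carrier (tbl_group ?A))"
    using g by (simp add: tbl_group_def)
  ultimately have "group (tbl_group ?A)" and "?g \<in> iso K (tbl_group ?A)"
    using group_iso_of_bij_hom[OF assms(1)] by blast+
  moreover have "?A \<in> topspace table_top"
    using g \<beta> by (auto simp: table_top_def pullback_table_def PiE_iff extensional_def bij_betwE)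
  ultimately show "?A \<in> Gspace" and "tbl_group ?A \<cong> K"
    using K.iso_sym by (auto simp: Gspace_def is_iso_def)
qed

lemma in_closure_of_product_discreteI:
  assumes "f \<in> topspace (product_topology (\<lambda>_. discrete_topology X) I)"
    and "S \<subseteq> topspace (product_topology (\<lambda>_. discrete_topology X) I)"
    and "\<And>F. finite F \<Longrightarrow> F \<subseteq> I \<Longrightarrow> \<exists>g\<in>S. \<forall>i\<in>F. g i = f i"
  shows "f \<in> product_topology (\<lambda>_. discrete_topology X) I closure_of S"
  unfolding in_closure_of
proof (intro conjI allI impI assms(1))
  fix T
  assume "f \<in> T \<and> openin (product_topology (\<lambda>_. discrete_topology X) I) T"
  then obtain U where f: "f \<in> (\<Pi>\<^sub>E i\<in>I. U i)" and fin: "finite {i. U i \<noteq> X}"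
    and U: "(\<Pi>\<^sub>E i\<in>I. U i) \<subseteq> T"
    using product_topology_open_contains_basis[of "\<lambda>_. discrete_topology X" I T f] by auto
  obtain g where g: "g \<in> S" and agree: "\<forall>i\<in>{i \<in> I. U i \<noteq> X}. g i = f i"
    using assms(3)[of "{i \<in> I. U i \<noteq> X}"] fin by auto
  have "g \<in> (\<Pi>\<^sub>E i\<in>I. X)"
    using g assms(2) by auto
  then have "g \<in> (\<Pi>\<^sub>E i\<in>I. U i)"
    using f agree by (auto simp: PiE_iff)
  then show "\<exists>y. y \<in> S \<and> y \<in> T"
    using g U by blast
qed

lemma alg_closed_bij_respecting_finite_part_of_table:
  fixes K :: "'a monoid"
  assumes "alg_closed K" and "countable (carrier K)" and "infinite (carrier K)"
    and "G \<in> Gspace" and "finite S" and "S \<subseteq> Npos" and "1 \<in> S"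
  shows "\<exists>\<beta>. bij_betw \<beta> Npos (carrier K) \<and> \<beta> 1 = \<one>\<^bsub>K\<^esub> \<and>
           (\<forall>x\<in>S. \<forall>y\<in>S. G (x, y) \<in> S \<longrightarrow> \<beta> (G (x, y)) = \<beta> x \<otimes>\<^bsub>K\<^esub> \<beta> y)"
proof -
  interpret L: group "tbl_group G"
    using assms(4) by (simp add: Gspace_def)
  interpret K: group K
    using assms(1) by (simp add: alg_closed_def)
  have carrier_L: "carrier (tbl_group G) = Npos" and mult_L: "x \<otimes>\<^bsub>tbl_group G\<^esub> y = G (x, y)"
    and one_L: "\<one>\<^bsub>tbl_group G\<^esub> = 1" for x y
    by (simp_all add: tbl_group_def)
  obtain s where sK: "\<forall>n. s n \<in> carrier K" and s_inj: "inj_on s S"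
    and s_mult: "\<forall>x\<in>S. \<forall>y\<in>S. G (x, y) \<in> S \<longrightarrow> s (G (x, y)) = s x \<otimes>\<^bsub>K\<^esub> s y"
    using alg_closed_finite_partial_embedding[OF assms(1,2) L.is_group assms(5)] assms(6)
    by (auto simp: carrier_L mult_L)
  have "G (1, 1) = 1"
    using L.l_one[OF L.one_closed] by (simp add: mult_L one_L)
  then have "s 1 \<otimes>\<^bsub>K\<^esub> s 1 = s 1"
    using s_mult assms(7) by metis
  then have s1: "s 1 = \<one>\<^bsub>K\<^esub>"
    using sK by simp
  have "infinite Npos"
    by (simp add: Npos_def infinite_Ici)
  then obtain \<beta> where "bij_betw \<beta> Npos (carrier K)" and "\<forall>x\<in>S. \<beta> x = s x"
    using extend_inj_on_to_bij_betw[OF _ _ assms(2,3,5,6) s_inj] sK by blast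
  then show ?thesis
    using s1 s_mult assms(7) by auto
qed

lemma iso_class_meets_every_basic_open:
  fixes K :: "'a monoid"
  assumes "alg_closed K" and "countable (carrier K)" and "infinite (carrier K)"
    and "G \<in> Gspace" and "finite F" and "F \<subseteq> Npos \<times> Npos"
  shows "\<exists>A\<in>Gspace. tbl_group A \<cong> K \<and> (\<forall>p\<in>F. A p = G p)"
proof -
  define S where "S = insert 1 (fst ` F \<union> snd ` F \<union> G ` F)"
  have "G p \<in> Npos" if "p \<in> F" for p
    using that assms(4,6) by (auto simp: Gspace_def table_top_def PiE_iff)
  then have S: "finite S" "S \<subseteq> Npos" "1 \<in> S"
    using assms(5,6) by (auto simp: S_def Npos_def)
  obtain \<beta> where \<beta>: "bij_betw \<beta> Npos (carrier K)" and \<beta>1: "\<beta> 1 = \<one>\<^bsub>K\<^esub>"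
    and \<beta>_mult: "\<forall>x\<in>S. \<forall>y\<in>S. G (x, y) \<in> S \<longrightarrow> \<beta> (G (x, y)) = \<beta> x \<otimes>\<^bsub>K\<^esub> \<beta> y"
    using alg_closed_bij_respecting_finite_part_of_table[OF assms(1-4) S] by blast
  have "pullback_table K \<beta> (a, b) = G (a, b)" if "(a, b) \<in> F" for a b
  proof -
    have abc: "a \<in> S" "b \<in> S" "G (a, b) \<in> S"
      using that by (auto simp: S_def rev_image_eqI)
    then have "\<beta> a \<otimes>\<^bsub>K\<^esub> \<beta> b = \<beta> (G (a, b))"
      using \<beta>_mult by simp
    then show ?thesis
      using pullback_table_eq[OF \<beta>] abc S(2) by blast
  qed
  then show ?thesis
    using pullback_table_in_Gspace[OF _ \<beta> \<beta>1] assms(1) by (auto simp: alg_closed_def)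
qed

theorem theorem6p5:
  fixes K :: "'a monoid"
  assumes "alg_closed K"
    and "countable (carrier K)"
    and "infinite (carrier K)"
  shows "(subtopology table_top Gspace) closure_of {A \<in> Gspace. tbl_group A \<cong> K} = Gspace"
proof -
  let ?I = "{A \<in> Gspace. tbl_group A \<cong> K}"
  have "G \<in> table_top closure_of ?I" if G: "G \<in> Gspace" for G
  proof (rule in_closure_of_product_discreteI[of _ Npos "Npos \<times> Npos", folded table_top_def])
    show "G \<in> topspace table_top" and "?I \<subseteq> topspace table_top"
      using G by (auto simp: Gspace_def)
    show "\<exists>A\<in>?I. \<forall>p\<in>F. A p = G p" if "finite F" and "F \<subseteq> Npos \<times> Npos" for F
      using iso_class_meets_every_basic_open[OF assms G that] by auto
  qed
  then show ?thesis
    by (auto simp: closure_of_subtopology Int_absorb1)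
qed

end
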